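(* Let $S=S^{\top}\in\mathbb{R}^{n\times n}$ be a nonnegative irreducible symmetric matrix and $K=-K^{\top}\in\mathbb{R}^{n\times n}$ a skew-symmetric matrix such that $A=S+K\ge0$ (entrywise). Let $Q$ be a real orthogonal matrix such that $Q^{\top}SQ=\mathrm{diag}(r(S),\lambda_2,\dots,\lambda_n)$. Then $t\mapsto r\big((1-t)A+tA^{\top}\big)$ is constant on $t\in[0,1]$ if and only if $$Q^{\top}KQ=\begin{pmatrix}0 & \mathbf{0}^{\top}\\ \mathbf{0} & K_2\end{pmatrix}$$ for some skew-symmetric $K_2=-K_2^{\top}\in\mathbb{R}^{(n-1)\times(n-1)}$, where $\mathbf{0}\in\mathbb{R}^{n-1}$ is the zero vector.
   Context: $r(M)$ denotes the spectral radius of $M$; $\lambda_2,\dots,\lambda_n$ are the remaining eigenvalues of $S$. *)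

theory Defs
  imports "Jordan_Normal_Form.Spectral_Radius"
begin

text \<open>Irreducibility of a square matrix (Horn--Johnson convention via the directed
graph of the matrix): for n >= 2, A is irreducible iff its directed graph on the
vertices 0..n-1 (edge i -> j iff A(i,j) is nonzero) is strongly connected;
every 1 x 1 matrix counts as irreducible here (that case is trivial for the theorem).\<close>

definition mat_graph :: "real mat \<Rightarrow> (nat \<times> nat) set" where
  "mat_graph A = {(i, j). i < dim_row A \<and> j < dim_row A \<and> A $$ (i, j) \<noteq> 0}"

definition irreducible_mat :: "real mat \<Rightarrow> bool" where
  "irreducible_mat A \<longleftrightarrow> square_mat A \<and>
     (\<forall>i < dim_row A. \<forall>j < dim_row A. i \<noteq> j \<longrightarrow> (i, j) \<in> (mat_graph A)\<^sup>+)"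

definition nonneg_mat :: "real mat \<Rightarrow> bool" where
  "nonneg_mat A \<longleftrightarrow> (\<forall>i < dim_row A. \<forall>j < dim_col A. A $$ (i, j) \<ge> 0)"

definition real_spectral_radius :: "real mat \<Rightarrow> real" where
  "real_spectral_radius A = spectral_radius (map_mat complex_of_real A)"

end

theory Submission
  imports Defs
begin

text \<open>
Along the path, (1 - t) A + t A' = S + s K with s = 1 - 2t, and for |s| <= 1 these matrices
are entrywise nonnegative. If z is an eigenvector of S + s K for the eigenvalue mu and p = |z|
entrywise, then |mu| |p|^2 <= p' (S + s K) p = p' S p <= r(S) |p|^2, because a skew-symmetric
matrix has vanishing quadratic form. So the spectral radius never exceeds its value r(S) at
t = 1/2, and the path is constant iff r(S + s K) = r(S) for all |s| <= 1.
For s = 1 this chain is then tight: p is a Perron vector of S, positive by irreducibility, and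
K p >= 0 together with p' K p = 0 forces K p = 0. The Perron eigenspace of S is a line, so the
first column q of Q is a multiple of p and K q = 0, which is the block form of Q' K Q.
Conversely, K q = 0 makes q an eigenvector for r(S) of every S + s K.
\<close>

lemma mult_mat_index_sum:
  assumes "A \<in> carrier_mat nr m" "B \<in> carrier_mat m nc" "i < nr" "j < nc"
  shows "(A * B) $$ (i, j) = (\<Sum>k<m. A $$ (i, k) * B $$ (k, j))"
  using assms by (simp add: scalar_prod_def lessThan_atLeast0)

lemma mult_mat_vec_index_sum:
  assumes "A \<in> carrier_mat nr m" "v \<in> carrier_vec m" "i < nr"
  shows "(A *\<^sub>v v) $ i = (\<Sum>k<m. A $$ (i, k) * v $ k)"
  using assms by (simp add: scalar_prod_def lessThan_atLeast0)

lemma mult_mat_vec_col_index_sum: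
  assumes "A \<in> carrier_mat nr m" "B \<in> carrier_mat m nc" "i < nr" "k < nc"
  shows "(A *\<^sub>v col B k) $ i = (\<Sum>j<m. A $$ (i, j) * B $$ (j, k))"
  using assms by (simp add: scalar_prod_def lessThan_atLeast0)

lemma skew_mat_index_swap:
  assumes "K \<in> carrier_mat n n" "transpose_mat K = - K" "i < n" "j < n"
  shows "K $$ (j, i) = - K $$ (i, j)"
proof -
  have "K $$ (j, i) = transpose_mat K $$ (i, j)" using assms(1,3,4) by simp
  also have "\<dots> = - K $$ (i, j)" using assms by simp
  finally show ?thesis .
qed

lemma symmetric_mat_index_swap:
  assumes "S \<in> carrier_mat n n" "transpose_mat S = S" "i < n" "j < n"
  shows "S $$ (j, i) = S $$ (i, j)"
proof -
  have "S $$ (j, i) = transpose_mat S $$ (i, j)" using assms(1,3,4) by simp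
  then show ?thesis using assms(2) by simp
qed

lemma skew_smult_mat:
  fixes K :: "'a :: comm_ring_1 mat"
  assumes K: "K \<in> carrier_mat n n" "transpose_mat K = - K"
  shows "transpose_mat (a \<cdot>\<^sub>m K) = - (a \<cdot>\<^sub>m K)"
proof (rule eq_matI)
  fix i j assume "i < dim_row (- (a \<cdot>\<^sub>m K))" "j < dim_col (- (a \<cdot>\<^sub>m K))"
  then have ij: "i < n" "j < n" using K by auto
  then show "transpose_mat (a \<cdot>\<^sub>m K) $$ (i, j) = (- (a \<cdot>\<^sub>m K)) $$ (i, j)"
    using K skew_mat_index_swap[OF K ij] by simp
qed (use K in auto)

lemma skew_convex_path:
  fixes S K :: "'a :: comm_ring_1 mat"
  assumes S: "S \<in> carrier_mat n n" "transpose_mat S = S"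
    and K: "K \<in> carrier_mat n n" "transpose_mat K = - K"
  shows "(1 - t) \<cdot>\<^sub>m (S + K) + t \<cdot>\<^sub>m transpose_mat (S + K) = S + (1 - 2 * t) \<cdot>\<^sub>m K"
proof (rule eq_matI)
  fix i j assume "i < dim_row (S + (1 - 2 * t) \<cdot>\<^sub>m K)" "j < dim_col (S + (1 - 2 * t) \<cdot>\<^sub>m K)"
  then have ij: "i < n" "j < n" using S K by auto
  have "((1 - t) \<cdot>\<^sub>m (S + K) + t \<cdot>\<^sub>m transpose_mat (S + K)) $$ (i, j)
      = (1 - t) * (S $$ (i, j) + K $$ (i, j)) + t * (S $$ (j, i) + K $$ (j, i))"
    using ij S K by simp
  also have "\<dots> = S $$ (i, j) + (1 - 2 * t) * K $$ (i, j)"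
    unfolding symmetric_mat_index_swap[OF S ij] skew_mat_index_swap[OF K ij] by (simp add: algebra_simps)
  finally show "((1 - t) \<cdot>\<^sub>m (S + K) + t \<cdot>\<^sub>m transpose_mat (S + K)) $$ (i, j)
      = (S + (1 - 2 * t) \<cdot>\<^sub>m K) $$ (i, j)"
    using ij S K by simp
qed (use S K in auto)

lemma nonneg_mat_symmetric_plus_smult_skew:
  fixes S K :: "real mat"
  assumes S: "S \<in> carrier_mat n n" "transpose_mat S = S"
    and K: "K \<in> carrier_mat n n" "transpose_mat K = - K"
    and nonneg: "nonneg_mat (S + K)" and s: "\<bar>s\<bar> \<le> 1"
  shows "nonneg_mat (S + s \<cdot>\<^sub>m K)"
  unfolding nonneg_mat_def
proof (intro allI impI)
  fix i j assume "i < dim_row (S + s \<cdot>\<^sub>m K)" "j < dim_col (S + s \<cdot>\<^sub>m K)"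
  then have ij: "i < n" "j < n" using S K by auto
  have plus: "0 \<le> S $$ (i, j) + K $$ (i, j)"
    using nonneg ij S K unfolding nonneg_mat_def by auto
  have "0 \<le> S $$ (j, i) + K $$ (j, i)"
    using nonneg ij S K unfolding nonneg_mat_def by auto
  then have minus: "0 \<le> S $$ (i, j) - K $$ (i, j)"
    using symmetric_mat_index_swap[OF S ij] skew_mat_index_swap[OF K ij] by simp
  have "S $$ (i, j) + s * K $$ (i, j)
      = (1 + s) / 2 * (S $$ (i, j) + K $$ (i, j)) + (1 - s) / 2 * (S $$ (i, j) - K $$ (i, j))"
    by (simp add: field_simps)
  also have "\<dots> \<ge> 0"
  proof -
    have "0 \<le> (1 + s) / 2 * (S $$ (i, j) + K $$ (i, j))" by (rule mult_nonneg_nonneg) (use plus s in auto)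
    moreover have "0 \<le> (1 - s) / 2 * (S $$ (i, j) - K $$ (i, j))" by (rule mult_nonneg_nonneg) (use minus s in auto)
    ultimately show ?thesis by linarith
  qed
  finally show "0 \<le> (S + s \<cdot>\<^sub>m K) $$ (i, j)" using ij S K by simp
qed

lemma skew_quadratic_form_eq_0:
  fixes K :: "real mat"
  assumes "K \<in> carrier_mat n n" "transpose_mat K = - K"
  shows "(\<Sum>i<n. \<Sum>j<n. p i * K $$ (i, j) * p j) = 0"
proof -
  let ?X = "\<Sum>i<n. \<Sum>j<n. p i * K $$ (i, j) * p j"
  have "?X = (\<Sum>j<n. \<Sum>i<n. p i * K $$ (i, j) * p j)" by (rule sum.swap)
  also have "\<dots> = (\<Sum>j<n. \<Sum>i<n. - (p j * K $$ (j, i) * p i))"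
  proof (intro sum.cong refl)
    fix i j assume "j \<in> {..<n}" "i \<in> {..<n}"
    then show "p i * K $$ (i, j) * p j = - (p j * K $$ (j, i) * p i)"
      using skew_mat_index_swap[OF assms, of j i] by simp
  qed
  also have "\<dots> = - ?X" by (simp add: sum_negf)
  finally show ?thesis by simp
qed

lemma skew_mult_pos_nonneg_eq_0:
  fixes K :: "real mat"
  assumes K: "K \<in> carrier_mat n n" "transpose_mat K = - K"
    and p_pos: "\<forall>i<n. 0 < p i" and Kp_nonneg: "\<forall>i<n. 0 \<le> (\<Sum>j<n. K $$ (i, j) * p j)"
    and i: "i < n"
  shows "(\<Sum>j<n. K $$ (i, j) * p j) = 0"
proof -
  have "(\<Sum>i<n. p i * (\<Sum>j<n. K $$ (i, j) * p j)) = 0"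
    using skew_quadratic_form_eq_0[OF K, of p] by (simp add: sum_distrib_left mult.assoc)
  moreover have "\<forall>i\<in>{..<n}. 0 \<le> p i * (\<Sum>j<n. K $$ (i, j) * p j)"
    using p_pos Kp_nonneg by (auto intro!: mult_nonneg_nonneg simp: less_imp_le)
  ultimately have "\<forall>i\<in>{..<n}. p i * (\<Sum>j<n. K $$ (i, j) * p j) = 0"
    using sum_nonneg_eq_0_iff[of "{..<n}" "\<lambda>i. p i * (\<Sum>j<n. K $$ (i, j) * p j)"] by simp
  then have "p i * (\<Sum>j<n. K $$ (i, j) * p j) = 0" "0 < p i" using p_pos i by auto
  then show ?thesis by simp
qed

lemma abs_eigenvalue_le_real_spectral_radius:
  fixes M :: "real mat"
  assumes M: "M \<in> carrier_mat n n" and v: "v \<in> carrier_vec n" "v \<noteq> 0\<^sub>v n"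
    and Mv: "M *\<^sub>v v = lam \<cdot>\<^sub>v v"
  shows "\<bar>lam\<bar> \<le> real_spectral_radius M"
proof -
  let ?M = "map_mat complex_of_real M" and ?v = "map_vec complex_of_real v"
  have n: "0 < n" using v by (metis carrier_vecD eq_vecI gr0I index_zero_vec(2) less_nat_zero_code)
  have "?M *\<^sub>v ?v = map_vec complex_of_real (M *\<^sub>v v)"
    using of_real_hom.mult_mat_vec_hom[OF M v(1)] by metis
  also have "\<dots> = complex_of_real lam \<cdot>\<^sub>v ?v" unfolding Mv by (intro eq_vecI) auto
  finally have "eigenvector ?M ?v (complex_of_real lam)"
    unfolding eigenvector_def using v M by (auto simp: vec_eq_iff)
  then have "complex_of_real lam \<in> spectrum ?M" unfolding spectrum_def eigenvalue_def by auto
  then have "norm (complex_of_real lam) \<le> spectral_radius ?M"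
    using M n by (intro spectral_radius_mem_max(2)[of ?M n]) (auto intro!: image_eqI)
  then show ?thesis unfolding real_spectral_radius_def by simp
qed

lemma real_spectral_radius_eigenvector:
  fixes M :: "real mat"
  assumes "M \<in> carrier_mat n n" "0 < n"
  obtains z mu where "eigenvector (map_mat complex_of_real M) z mu"
    and "norm mu = real_spectral_radius M"
proof -
  let ?M = "map_mat complex_of_real M"
  have "?M \<in> carrier_mat n n" using assms by simp
  from spectral_radius_mem_max(1)[OF this assms(2)] obtain mu
    where "mu \<in> spectrum ?M" "spectral_radius ?M = norm mu" by auto
  then show ?thesis
    using that unfolding spectrum_def eigenvalue_def real_spectral_radius_def by auto
qed

lemma eigenvector_nonzero_index:
  assumes "eigenvector A z mu" "A \<in> carrier_mat n n"
  obtains i where "i < n" "z $ i \<noteq> 0"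
proof -
  have z: "z \<in> carrier_vec n" "z \<noteq> 0\<^sub>v n" using assms unfolding eigenvector_def by auto
  show ?thesis
  proof (rule ccontr)
    assume "\<not> thesis"
    then have "z = 0\<^sub>v n" using that z(1) by (intro eq_vecI) auto
    then show False using z(2) by contradiction
  qed
qed

lemma nonneg_mat_eigenvector_abs_subinvariant:
  fixes M :: "real mat"
  assumes M: "M \<in> carrier_mat n n" "nonneg_mat M"
    and ev: "eigenvector (map_mat complex_of_real M) z mu" and i: "i < n"
  shows "norm mu * norm (z $ i) \<le> (\<Sum>j<n. M $$ (i, j) * norm (z $ j))"
proof -
  have z: "z \<in> carrier_vec n" and Mz: "map_mat complex_of_real M *\<^sub>v z = mu \<cdot>\<^sub>v z"
    using ev M unfolding eigenvector_def by auto
  have "mu * z $ i = (map_mat complex_of_real M *\<^sub>v z) $ i" using Mz i z by simp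
  also have "\<dots> = (\<Sum>j<n. complex_of_real (M $$ (i, j)) * z $ j)"
    using M z i by (subst mult_mat_vec_index_sum[of _ n n]) auto
  finally have "norm mu * norm (z $ i) = norm (\<Sum>j<n. complex_of_real (M $$ (i, j)) * z $ j)"
    by (metis norm_mult)
  also have "\<dots> \<le> (\<Sum>j<n. norm (complex_of_real (M $$ (i, j)) * z $ j))" by (rule norm_sum)
  also have "\<dots> = (\<Sum>j<n. M $$ (i, j) * norm (z $ j))"
    using M i unfolding nonneg_mat_def by (intro sum.cong refl) (simp add: norm_mult)
  finally show ?thesis .
qed

lemma eigenvector_abs_quadratic_bound:
  fixes S K :: "real mat"
  assumes S: "S \<in> carrier_mat n n" and K: "K \<in> carrier_mat n n" "transpose_mat K = - K"
    and nonneg: "nonneg_mat (S + K)"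
    and ev: "eigenvector (map_mat complex_of_real (S + K)) z mu"
  shows "norm mu * (\<Sum>i<n. (norm (z $ i))\<^sup>2)
    \<le> (\<Sum>i<n. \<Sum>j<n. norm (z $ i) * S $$ (i, j) * norm (z $ j))"
proof -
  define p where "p i = norm (z $ i)" for i
  have "norm mu * (\<Sum>i<n. (p i)\<^sup>2) = (\<Sum>i<n. p i * (norm mu * p i))"
    by (simp add: sum_distrib_left power2_eq_square mult_ac)
  also have "\<dots> \<le> (\<Sum>i<n. p i * (\<Sum>j<n. (S + K) $$ (i, j) * p j))"
    using nonneg_mat_eigenvector_abs_subinvariant[of "S + K" n z mu] S K nonneg ev
    by (intro sum_mono mult_left_mono) (auto simp: p_def)
  also have "\<dots> = (\<Sum>i<n. (\<Sum>j<n. p i * S $$ (i, j) * p j) + (\<Sum>j<n. p i * K $$ (i, j) * p j))"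
    using S K by (intro sum.cong refl)
      (simp add: sum_distrib_left distrib_left distrib_right sum.distrib mult.assoc)
  also have "\<dots> = (\<Sum>i<n. \<Sum>j<n. p i * S $$ (i, j) * p j) + (\<Sum>i<n. \<Sum>j<n. p i * K $$ (i, j) * p j)"
    by (rule sum.distrib)
  also have "\<dots> = (\<Sum>i<n. \<Sum>j<n. p i * S $$ (i, j) * p j)"
    using skew_quadratic_form_eq_0[OF K] by simp
  finally show ?thesis unfolding p_def .
qed

lemma irreducible_nonneg_subinvariant_vanishes:
  fixes S :: "real mat"
  assumes S: "S \<in> carrier_mat n n" "nonneg_mat S" "irreducible_mat S"
    and x_nonneg: "\<forall>i<n. 0 \<le> x i" and sub: "\<forall>i<n. (\<Sum>j<n. S $$ (i, j) * x j) \<le> r * x i"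
    and i: "i < n" "x i = 0" and j: "j < n"
  shows "x j = 0"
proof -
  have edge: "x b = 0" if ab: "(a, b) \<in> mat_graph S" and xa: "x a = 0" for a b
  proof -
    from ab S have a: "a < n" and b: "b < n" and Sab: "S $$ (a, b) \<noteq> 0"
      unfolding mat_graph_def by auto
    have terms: "\<forall>j\<in>{..<n}. 0 \<le> S $$ (a, j) * x j"
      using S x_nonneg a unfolding nonneg_mat_def by auto
    have "(\<Sum>j<n. S $$ (a, j) * x j) \<le> r * x a" using sub a by blast
    moreover have "0 \<le> (\<Sum>j<n. S $$ (a, j) * x j)" using terms by (intro sum_nonneg) blast
    ultimately have "(\<Sum>j<n. S $$ (a, j) * x j) = 0" using xa by simp
    then have "\<forall>j\<in>{..<n}. S $$ (a, j) * x j = 0"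
      using sum_nonneg_eq_0_iff[of "{..<n}" "\<lambda>j. S $$ (a, j) * x j"] terms by simp
    then show ?thesis using b Sab by auto
  qed
  show ?thesis
  proof (cases "i = j")
    case False
    with S i j have "(i, j) \<in> (mat_graph S)\<^sup>+" unfolding irreducible_mat_def by auto
    then show ?thesis
    proof (induct rule: trancl_induct)
      case (base b)
      then show ?case using edge i by blast
    next
      case (step b c)
      then show ?case using edge by blast
    qed
  qed (use i in simp)
qed

lemma irreducible_nonneg_subinvariant_pos:
  fixes S :: "real mat"
  assumes S: "S \<in> carrier_mat n n" "nonneg_mat S" "irreducible_mat S"
    and x_nonneg: "\<forall>i<n. 0 \<le> x i" and sub: "\<forall>i<n. (\<Sum>j<n. S $$ (i, j) * x j) \<le> r * x i"
    and j: "j < n" "x j \<noteq> 0" and i: "i < n"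
  shows "0 < x i"
proof -
  have "x i \<noteq> 0"
    using irreducible_nonneg_subinvariant_vanishes[OF S x_nonneg sub i _ j(1)] j(2) by blast
  then show ?thesis using x_nonneg i by force
qed

lemma constant_on_path_iff:
  fixes f :: "real \<Rightarrow> 'b"
  shows "(\<exists>c. \<forall>t \<in> {0..1}. f (1 - 2 * t) = c) \<longleftrightarrow> (\<forall>s. \<bar>s\<bar> \<le> 1 \<longrightarrow> f s = f 0)"
proof
  assume "\<exists>c. \<forall>t \<in> {0..1}. f (1 - 2 * t) = c"
  then obtain c where c: "\<And>t. t \<in> {0..1} \<Longrightarrow> f (1 - 2 * t) = c" by blast
  have "f s = c" if "\<bar>s\<bar> \<le> 1" for s
  proof -
    have "(1 - s) / 2 \<in> {0..1}" using that by auto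
    moreover have "1 - 2 * ((1 - s) / 2) = s" by (simp add: field_simps)
    ultimately show ?thesis using c by fastforce
  qed
  then show "\<forall>s. \<bar>s\<bar> \<le> 1 \<longrightarrow> f s = f 0" by simp
next
  assume const: "\<forall>s. \<bar>s\<bar> \<le> 1 \<longrightarrow> f s = f 0"
  have "f (1 - 2 * t) = f 0" if "t \<in> {0..1}" for t
  proof -
    have "\<bar>1 - 2 * t\<bar> \<le> 1" using that by auto
    then show ?thesis using const by blast
  qed
  then show "\<exists>c. \<forall>t \<in> {0..1}. f (1 - 2 * t) = c" by blast
qed

locale orthogonal_diagonalization =
  fixes S Q :: "real mat" and n :: nat
  assumes S: "S \<in> carrier_mat n n"
    and Q: "Q \<in> carrier_mat n n" and Q_orth: "transpose_mat Q * Q = 1\<^sub>m n"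
    and Q_diag: "\<forall>i<n. \<forall>j<n. i \<noteq> j \<longrightarrow> (transpose_mat Q * S * Q) $$ (i, j) = 0"
begin

definition eig :: "nat \<Rightarrow> real" where
  "eig k = (transpose_mat Q * S * Q) $$ (k, k)"

definition coord :: "(nat \<Rightarrow> real) \<Rightarrow> nat \<Rightarrow> real" where
  "coord f k = (\<Sum>i<n. Q $$ (i, k) * f i)"

lemma Q_mult_transpose: "Q * transpose_mat Q = 1\<^sub>m n"
  using mat_mult_left_right_inverse[of "transpose_mat Q" n Q] Q Q_orth by simp

lemma S_mult_Q: "S * Q = Q * (transpose_mat Q * S * Q)"
proof -
  have "Q * (transpose_mat Q * S * Q) = (Q * transpose_mat Q) * S * Q"
    using Q S by (simp add: assoc_mult_mat[of _ n n _ n _ n])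
  then show ?thesis unfolding Q_mult_transpose using S by simp
qed

lemma S_mult_col_Q_index:
  assumes i: "i < n" and k: "k < n"
  shows "(\<Sum>j<n. S $$ (i, j) * Q $$ (j, k)) = eig k * Q $$ (i, k)"
proof -
  let ?D = "transpose_mat Q * S * Q"
  have "(\<Sum>j<n. S $$ (i, j) * Q $$ (j, k)) = (Q * ?D) $$ (i, k)"
    using mult_mat_index_sum[OF S Q i k] S_mult_Q by simp
  also have "\<dots> = (\<Sum>l<n. Q $$ (i, l) * ?D $$ (l, k))"
    by (rule mult_mat_index_sum) (use Q S i k in auto)
  also have "\<dots> = (\<Sum>l<n. if l = k then Q $$ (i, k) * eig k else 0)"
    using Q_diag k by (intro sum.cong refl) (auto simp: eig_def)
  finally show ?thesis using k by simp
qed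

lemma col_orthonormal:
  assumes "i < n" "k < n"
  shows "(\<Sum>j<n. Q $$ (j, i) * Q $$ (j, k)) = (if i = k then 1 else 0)"
  using mult_mat_index_sum[of "transpose_mat Q" n n Q n i k] Q Q_orth assms by simp

lemma row_orthonormal:
  assumes "i < n" "k < n"
  shows "(\<Sum>j<n. Q $$ (i, j) * Q $$ (k, j)) = (if i = k then 1 else 0)"
  using mult_mat_index_sum[of Q n n "transpose_mat Q" n i k] Q Q_mult_transpose assms by simp

lemma S_spectral_expansion:
  assumes i: "i < n" and j: "j < n"
  shows "S $$ (i, j) = (\<Sum>k<n. Q $$ (i, k) * eig k * Q $$ (j, k))"
proof -
  have "(S * Q) * transpose_mat Q = S * (Q * transpose_mat Q)"
    by (rule assoc_mult_mat) (use S Q in auto)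
  then have SQQt: "(S * Q) * transpose_mat Q = S" using S by (simp add: Q_mult_transpose)
  have "S $$ (i, j) = ((S * Q) * transpose_mat Q) $$ (i, j)" unfolding SQQt ..
  also have "\<dots> = (\<Sum>k<n. (S * Q) $$ (i, k) * transpose_mat Q $$ (k, j))"
    by (rule mult_mat_index_sum) (use S Q i j in auto)
  also have "\<dots> = (\<Sum>k<n. Q $$ (i, k) * eig k * Q $$ (j, k))"
  proof (intro sum.cong refl)
    fix k assume "k \<in> {..<n}"
    then have k: "k < n" by simp
    have "(S * Q) $$ (i, k) = eig k * Q $$ (i, k)"
      using mult_mat_index_sum[OF S Q i k] S_mult_col_Q_index[OF i k] by simp
    then show "(S * Q) $$ (i, k) * transpose_mat Q $$ (k, j) = Q $$ (i, k) * eig k * Q $$ (j, k)"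
      using Q j k by simp
  qed
  finally show ?thesis .
qed

lemma S_apply_coord:
  assumes i: "i < n"
  shows "(\<Sum>j<n. S $$ (i, j) * f j) = (\<Sum>k<n. Q $$ (i, k) * eig k * coord f k)"
proof -
  have "(\<Sum>j<n. S $$ (i, j) * f j) = (\<Sum>j<n. \<Sum>k<n. Q $$ (i, k) * eig k * Q $$ (j, k) * f j)"
    by (intro sum.cong refl) (simp add: S_spectral_expansion[OF i] sum_distrib_right)
  also have "\<dots> = (\<Sum>k<n. Q $$ (i, k) * eig k * coord f k)"
    by (subst sum.swap) (simp add: coord_def sum_distrib_left mult.assoc)
  finally show ?thesis .
qed

lemma coord_inversion:
  assumes i: "i < n"
  shows "(\<Sum>k<n. Q $$ (i, k) * coord f k) = f i"
proof -
  have "(\<Sum>k<n. Q $$ (i, k) * coord f k) = (\<Sum>j<n. f j * (\<Sum>k<n. Q $$ (i, k) * Q $$ (j, k)))"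
    by (simp add: coord_def sum_distrib_left mult_ac) (rule sum.swap)
  also have "\<dots> = f i" using i by (simp add: row_orthonormal if_distrib cong: if_cong)
  finally show ?thesis .
qed

lemma sum_squares_coord: "(\<Sum>i<n. (f i)\<^sup>2) = (\<Sum>k<n. (coord f k)\<^sup>2)"
proof -
  have "(\<Sum>k<n. (coord f k)\<^sup>2) = (\<Sum>i<n. f i * (\<Sum>k<n. Q $$ (i, k) * coord f k))"
    by (simp add: power2_eq_square coord_def[of f] sum_distrib_left mult_ac) (rule sum.swap)
  also have "\<dots> = (\<Sum>i<n. (f i)\<^sup>2)" by (simp add: coord_inversion power2_eq_square)
  finally show ?thesis by simp
qed

lemma quadratic_form_coord:
  "(\<Sum>i<n. \<Sum>j<n. f i * S $$ (i, j) * f j) = (\<Sum>k<n. eig k * (coord f k)\<^sup>2)"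
proof -
  have "(\<Sum>i<n. \<Sum>j<n. f i * S $$ (i, j) * f j) = (\<Sum>i<n. f i * (\<Sum>j<n. S $$ (i, j) * f j))"
    by (simp add: sum_distrib_left mult.assoc)
  also have "\<dots> = (\<Sum>i<n. f i * (\<Sum>k<n. Q $$ (i, k) * eig k * coord f k))"
    by (intro sum.cong refl) (simp add: S_apply_coord)
  also have "\<dots> = (\<Sum>k<n. eig k * (coord f k)\<^sup>2)"
    by (simp add: sum_distrib_left mult_ac power2_eq_square coord_def) (rule sum.swap)
  finally show ?thesis .
qed

lemma S_mult_col_Q:
  assumes k: "k < n"
  shows "S *\<^sub>v col Q k = eig k \<cdot>\<^sub>v col Q k"
proof (rule eq_vecI)
  fix i assume "i < dim_vec (eig k \<cdot>\<^sub>v col Q k)"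
  then have i: "i < n" using Q by simp
  have "(S *\<^sub>v col Q k) $ i = eig k * Q $$ (i, k)"
    by (simp add: mult_mat_vec_col_index_sum[OF S Q i k] S_mult_col_Q_index[OF i k])
  then show "(S *\<^sub>v col Q k) $ i = (eig k \<cdot>\<^sub>v col Q k) $ i" using Q i k by simp
qed (use S Q in simp)

lemma col_Q_nonzero:
  assumes k: "k < n"
  shows "col Q k \<noteq> 0\<^sub>v n"
proof
  assume col0: "col Q k = 0\<^sub>v n"
  have "Q $$ (j, k) = 0" if j: "j < n" for j
  proof -
    have "Q $$ (j, k) = col Q k $ j" using Q j k by simp
    then show ?thesis using col0 j by simp
  qed
  then show False using col_orthonormal[OF k k] by simp
qed

lemma eig_le_real_spectral_radius:
  assumes k: "k < n"
  shows "eig k \<le> real_spectral_radius S"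
proof -
  have "col Q k \<in> carrier_vec n" using Q by auto
  then have "\<bar>eig k\<bar> \<le> real_spectral_radius S"
    using abs_eigenvalue_le_real_spectral_radius[OF S] S_mult_col_Q[OF k] col_Q_nonzero[OF k] by blast
  then show ?thesis by simp
qed

context
  fixes r :: real
  assumes eig_le: "\<And>k. k < n \<Longrightarrow> eig k \<le> r"
begin

lemma quadratic_form_le: "(\<Sum>i<n. \<Sum>j<n. f i * S $$ (i, j) * f j) \<le> r * (\<Sum>i<n. (f i)\<^sup>2)"
proof -
  have "(\<Sum>k<n. eig k * (coord f k)\<^sup>2) \<le> (\<Sum>k<n. r * (coord f k)\<^sup>2)"
    by (intro sum_mono mult_right_mono) (auto simp: eig_le)
  then show ?thesis by (simp add: quadratic_form_coord sum_squares_coord[of f] sum_distrib_left)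
qed

lemma quadratic_form_eq_imp_eigenvector:
  assumes eq: "(\<Sum>i<n. \<Sum>j<n. f i * S $$ (i, j) * f j) = r * (\<Sum>i<n. (f i)\<^sup>2)"
    and i: "i < n"
  shows "(\<Sum>j<n. S $$ (i, j) * f j) = r * f i"
proof -
  have "(\<Sum>k<n. (r - eig k) * (coord f k)\<^sup>2) = 0"
    using eq by (simp add: quadratic_form_coord sum_squares_coord[of f] sum_distrib_left
        left_diff_distrib sum_subtractf)
  moreover have "\<forall>k\<in>{..<n}. 0 \<le> (r - eig k) * (coord f k)\<^sup>2" using eig_le by simp
  ultimately have "\<forall>k\<in>{..<n}. (r - eig k) * (coord f k)\<^sup>2 = 0"
    using sum_nonneg_eq_0_iff[of "{..<n}" "\<lambda>k. (r - eig k) * (coord f k)\<^sup>2"] by simp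
  then have eig_coord: "eig k * coord f k = r * coord f k" if "k < n" for k
    using that by auto
  have "(\<Sum>j<n. S $$ (i, j) * f j) = (\<Sum>k<n. Q $$ (i, k) * (eig k * coord f k))"
    by (simp add: S_apply_coord[OF i] mult.assoc)
  also have "\<dots> = r * (\<Sum>k<n. Q $$ (i, k) * coord f k)"
    by (simp add: eig_coord sum_distrib_left mult_ac)
  finally show ?thesis by (simp add: coord_inversion[OF i])
qed

lemma eigenvector_vanishing_somewhere_eq_0:
  assumes S_nonneg: "nonneg_mat S" and S_irr: "irreducible_mat S"
    and ev: "\<forall>i<n. (\<Sum>j<n. S $$ (i, j) * w j) = r * w i"
    and i: "i < n" "w i = 0" and j: "j < n"
  shows "w j = 0"
proof -
  define a where "a i = \<bar>w i\<bar>" for i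
  \<comment> \<open>|w| is at least as good as w in the Rayleigh quotient, hence also an eigenvector.\<close>
  have "r * (\<Sum>i<n. (a i)\<^sup>2) = (\<Sum>i<n. r * (a i)\<^sup>2)" by (simp add: sum_distrib_left)
  also have "\<dots> = (\<Sum>i<n. w i * (\<Sum>j<n. S $$ (i, j) * w j))"
  proof (intro sum.cong refl)
    fix i assume "i \<in> {..<n}"
    then have "(\<Sum>j<n. S $$ (i, j) * w j) = r * w i" using ev by simp
    then show "r * (a i)\<^sup>2 = w i * (\<Sum>j<n. S $$ (i, j) * w j)"
      by (simp add: a_def power2_eq_square mult.left_commute)
  qed
  also have "\<dots> = (\<Sum>i<n. \<Sum>j<n. (w i * w j) * S $$ (i, j))"
    by (simp add: sum_distrib_left mult_ac)
  also have "\<dots> \<le> (\<Sum>i<n. \<Sum>j<n. \<bar>w i * w j\<bar> * S $$ (i, j))"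
  proof (intro sum_mono mult_right_mono)
    fix i j assume "i \<in> {..<n}" "j \<in> {..<n}"
    then show "0 \<le> S $$ (i, j)" using S_nonneg S unfolding nonneg_mat_def by auto
  qed simp
  also have "\<dots> = (\<Sum>i<n. \<Sum>j<n. a i * S $$ (i, j) * a j)"
    by (simp add: a_def abs_mult mult_ac)
  finally have "(\<Sum>i<n. \<Sum>j<n. a i * S $$ (i, j) * a j) = r * (\<Sum>i<n. (a i)\<^sup>2)"
    using quadratic_form_le[of a] by linarith
  then have "\<forall>i<n. (\<Sum>j<n. S $$ (i, j) * a j) = r * a i"
    using quadratic_form_eq_imp_eigenvector by blast
  then have "\<forall>i<n. (\<Sum>j<n. S $$ (i, j) * a j) \<le> r * a i" by simp
  moreover have "\<forall>i<n. 0 \<le> a i" "a i = 0" using i by (simp_all add: a_def)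
  ultimately have "a j = 0"
    using irreducible_nonneg_subinvariant_vanishes[OF S S_nonneg S_irr] i(1) j by blast
  then show ?thesis by (simp add: a_def)
qed

lemma eigenvectors_proportional:
  assumes S_nonneg: "nonneg_mat S" and S_irr: "irreducible_mat S"
    and p: "\<forall>i<n. (\<Sum>j<n. S $$ (i, j) * p j) = r * p i"
    and v: "\<forall>i<n. (\<Sum>j<n. S $$ (i, j) * v j) = r * v i"
    and i0: "i0 < n" "p i0 \<noteq> 0" and j: "j < n"
  shows "v j = v i0 / p i0 * p j"
proof -
  define w where "w i = p i0 * v i - v i0 * p i" for i
  have "(\<Sum>j<n. S $$ (i, j) * w j) = r * w i" if i: "i < n" for i
  proof -
    have "(\<Sum>j<n. S $$ (i, j) * w j)
        = p i0 * (\<Sum>j<n. S $$ (i, j) * v j) - v i0 * (\<Sum>j<n. S $$ (i, j) * p j)"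
      by (simp add: w_def sum_distrib_left sum_subtractf right_diff_distrib mult.left_commute)
    also have "\<dots> = r * w i"
      unfolding p[rule_format, OF i] v[rule_format, OF i] w_def by (simp add: algebra_simps)
    finally show ?thesis .
  qed
  then have "\<forall>i<n. (\<Sum>j<n. S $$ (i, j) * w j) = r * w i" by blast
  then have "w j = 0"
    by (rule eigenvector_vanishing_somewhere_eq_0[OF S_nonneg S_irr _ i0(1) _ j]) (simp add: w_def)
  then show ?thesis using i0(2) by (simp add: w_def field_simps)
qed

lemma real_spectral_radius_skew_perturbation_le:
  assumes K: "K \<in> carrier_mat n n" "transpose_mat K = - K"
    and nonneg: "nonneg_mat (S + K)" and n: "0 < n"
  shows "real_spectral_radius (S + K) \<le> r"
proof -
  obtain z mu where ev: "eigenvector (map_mat complex_of_real (S + K)) z mu"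
    and mu: "norm mu = real_spectral_radius (S + K)"
    using real_spectral_radius_eigenvector[of "S + K" n] S K n by auto
  define p where "p i = norm (z $ i)" for i
  have "map_mat complex_of_real (S + K) \<in> carrier_mat n n" using S K by simp
  then obtain i where i: "i < n" "z $ i \<noteq> 0"
    using eigenvector_nonzero_index[OF ev] by blast
  have pos: "0 < (\<Sum>i<n. (p i)\<^sup>2)"
    using i by (intro sum_pos2[of _ i]) (auto simp: p_def)
  have "norm mu * (\<Sum>i<n. (p i)\<^sup>2) \<le> r * (\<Sum>i<n. (p i)\<^sup>2)"
    using eigenvector_abs_quadratic_bound[OF S K nonneg ev] quadratic_form_le[of p]
    unfolding p_def by linarith
  then show ?thesis using pos mu by simp
qed

lemma skew_perturbation_positive_kernel_vector:
  assumes S_nonneg: "nonneg_mat S" and S_irr: "irreducible_mat S"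
    and K: "K \<in> carrier_mat n n" "transpose_mat K = - K" and nonneg: "nonneg_mat (S + K)"
    and radius: "real_spectral_radius (S + K) = r" and n: "0 < n"
  obtains p where "\<forall>i<n. 0 < p i" and "\<forall>i<n. (\<Sum>j<n. S $$ (i, j) * p j) = r * p i"
    and "\<forall>i<n. (\<Sum>j<n. K $$ (i, j) * p j) = 0"
proof -
  have SK: "S + K \<in> carrier_mat n n" using S K by simp
  obtain z mu where ev: "eigenvector (map_mat complex_of_real (S + K)) z mu"
    and "norm mu = real_spectral_radius (S + K)"
    using real_spectral_radius_eigenvector[OF SK n] by blast
  then have mu: "norm mu = r" using radius by simp
  define p where "p i = norm (z $ i)" for i
  have p_nonneg: "\<forall>i<n. 0 \<le> p i" by (simp add: p_def)
  have "r * (\<Sum>i<n. (p i)\<^sup>2) \<le> (\<Sum>i<n. \<Sum>j<n. p i * S $$ (i, j) * p j)"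
    using eigenvector_abs_quadratic_bound[OF S K nonneg ev] mu unfolding p_def by simp
  then have "(\<Sum>i<n. \<Sum>j<n. p i * S $$ (i, j) * p j) = r * (\<Sum>i<n. (p i)\<^sup>2)"
    using quadratic_form_le[of p] by linarith
  then have Sp: "\<forall>i<n. (\<Sum>j<n. S $$ (i, j) * p j) = r * p i"
    using quadratic_form_eq_imp_eigenvector by blast
  have Kp_nonneg: "\<forall>i<n. 0 \<le> (\<Sum>j<n. K $$ (i, j) * p j)"
  proof (intro allI impI)
    fix i assume i: "i < n"
    have "r * p i \<le> (\<Sum>j<n. (S + K) $$ (i, j) * p j)"
      using nonneg_mat_eigenvector_abs_subinvariant[OF SK nonneg ev i] mu unfolding p_def by simp
    also have "\<dots> = (\<Sum>j<n. S $$ (i, j) * p j) + (\<Sum>j<n. K $$ (i, j) * p j)"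
      using S K i by (simp add: distrib_right sum.distrib)
    finally show "0 \<le> (\<Sum>j<n. K $$ (i, j) * p j)" using Sp i by simp
  qed
  have "map_mat complex_of_real (S + K) \<in> carrier_mat n n" using SK by simp
  then obtain i1 where i1: "i1 < n" "p i1 \<noteq> 0"
    using eigenvector_nonzero_index[OF ev] unfolding p_def by auto
  have "\<forall>i<n. (\<Sum>j<n. S $$ (i, j) * p j) \<le> r * p i" using Sp by simp
  then have p_pos: "\<forall>i<n. 0 < p i"
    using irreducible_nonneg_subinvariant_pos[OF S S_nonneg S_irr p_nonneg _ i1] by blast
  show ?thesis
    using that[OF p_pos Sp] skew_mult_pos_nonneg_eq_0[OF K p_pos Kp_nonneg] by blast
qed

lemma skew_perturbation_kernel_contains_col:
  assumes S_nonneg: "nonneg_mat S" and S_irr: "irreducible_mat S"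
    and K: "K \<in> carrier_mat n n" "transpose_mat K = - K" and nonneg: "nonneg_mat (S + K)"
    and radius: "real_spectral_radius (S + K) = r" and k: "k < n" and eig_k: "eig k = r"
  shows "K *\<^sub>v col Q k = 0\<^sub>v n"
proof -
  obtain p where p_pos: "\<forall>i<n. 0 < p i" and Sp: "\<forall>i<n. (\<Sum>j<n. S $$ (i, j) * p j) = r * p i"
    and Kp: "\<forall>i<n. (\<Sum>j<n. K $$ (i, j) * p j) = 0"
    using skew_perturbation_positive_kernel_vector[OF S_nonneg S_irr K nonneg radius] k by auto
  have "\<forall>i<n. (\<Sum>j<n. S $$ (i, j) * Q $$ (j, k)) = r * Q $$ (i, k)"
    using S_mult_col_Q_index k eig_k by simp
  then have "Q $$ (j, k) = Q $$ (0, k) / p 0 * p j" if "j < n" for j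
    using eigenvectors_proportional[OF S_nonneg S_irr Sp, of "\<lambda>j. Q $$ (j, k)" 0 j] p_pos k that
    by fastforce
  then obtain c where proportional: "Q $$ (j, k) = c * p j" if "j < n" for j by blast
  show ?thesis
  proof (rule eq_vecI)
    fix i assume "i < dim_vec (0\<^sub>v n)"
    then have i: "i < n" by simp
    have "(K *\<^sub>v col Q k) $ i = (\<Sum>j<n. K $$ (i, j) * Q $$ (j, k))"
      by (rule mult_mat_vec_col_index_sum[OF K(1) Q i k])
    also have "\<dots> = c * (\<Sum>j<n. K $$ (i, j) * p j)"
      by (simp add: proportional sum_distrib_left mult_ac)
    finally show "(K *\<^sub>v col Q k) $ i = 0\<^sub>v n $ i" using Kp i by simp
  qed (use K Q in auto)
qed

lemma real_spectral_radius_skew_perturbation_eq: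
  assumes K: "K \<in> carrier_mat n n" "transpose_mat K = - K" and nonneg: "nonneg_mat (S + K)"
    and k: "k < n" and eig_k: "eig k = r" and kernel: "K *\<^sub>v col Q k = 0\<^sub>v n"
  shows "real_spectral_radius (S + K) = r"
proof -
  have col: "col Q k \<in> carrier_vec n" using Q by auto
  have "(S + K) *\<^sub>v col Q k = S *\<^sub>v col Q k + K *\<^sub>v col Q k"
    by (rule add_mult_distrib_mat_vec[OF S K(1) col])
  also have "\<dots> = r \<cdot>\<^sub>v col Q k" using S_mult_col_Q[OF k] eig_k kernel col by simp
  finally have "\<bar>r\<bar> \<le> real_spectral_radius (S + K)"
    using abs_eigenvalue_le_real_spectral_radius[of "S + K" n] S K col col_Q_nonzero[OF k] by simp
  moreover have "real_spectral_radius (S + K) \<le> r"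
    using real_spectral_radius_skew_perturbation_le[OF K nonneg] k by simp
  ultimately show ?thesis by simp
qed

lemma real_spectral_radius_skew_path_eq_iff:
  assumes S_nonneg: "nonneg_mat S" and S_irr: "irreducible_mat S"
    and K: "K \<in> carrier_mat n n" "transpose_mat K = - K"
    and nonneg: "\<And>s. \<bar>s\<bar> \<le> 1 \<Longrightarrow> nonneg_mat (S + s \<cdot>\<^sub>m K)"
    and k: "k < n" and eig_k: "eig k = r"
  shows "(\<forall>s. \<bar>s\<bar> \<le> 1 \<longrightarrow> real_spectral_radius (S + s \<cdot>\<^sub>m K) = r) \<longleftrightarrow> K *\<^sub>v col Q k = 0\<^sub>v n"
proof
  assume const: "\<forall>s. \<bar>s\<bar> \<le> 1 \<longrightarrow> real_spectral_radius (S + s \<cdot>\<^sub>m K) = r"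
  have SK: "S + 1 \<cdot>\<^sub>m K = S + K" using S K by (intro eq_matI) auto
  have "nonneg_mat (S + K)" using nonneg[of 1] SK by simp
  moreover have "real_spectral_radius (S + K) = r" using const[rule_format, of 1] SK by simp
  ultimately show "K *\<^sub>v col Q k = 0\<^sub>v n"
    by (rule skew_perturbation_kernel_contains_col[OF S_nonneg S_irr K _ _ k eig_k])
next
  assume kernel: "K *\<^sub>v col Q k = 0\<^sub>v n"
  show "\<forall>s. \<bar>s\<bar> \<le> 1 \<longrightarrow> real_spectral_radius (S + s \<cdot>\<^sub>m K) = r"
  proof (intro allI impI)
    fix s :: real assume s: "\<bar>s\<bar> \<le> 1"
    have "(s \<cdot>\<^sub>m K) *\<^sub>v col Q k = 0\<^sub>v n"
    proof (rule eq_vecI)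
      fix i assume "i < dim_vec (0\<^sub>v n)"
      then show "((s \<cdot>\<^sub>m K) *\<^sub>v col Q k) $ i = 0\<^sub>v n $ i"
        using arg_cong[OF kernel, of "\<lambda>v. v $ i"] K Q k by simp
    qed (use K in simp)
    moreover have "s \<cdot>\<^sub>m K \<in> carrier_mat n n" using K by simp
    ultimately show "real_spectral_radius (S + s \<cdot>\<^sub>m K) = r"
      using real_spectral_radius_skew_perturbation_eq[OF _ skew_smult_mat[OF K] nonneg[OF s] k eig_k]
      by blast
  qed
qed

end

end

lemma skew_congruence:
  fixes K Q :: "'a :: comm_ring_1 mat"
  assumes K: "K \<in> carrier_mat n n" "transpose_mat K = - K" and Q: "Q \<in> carrier_mat n m"
  shows "transpose_mat (transpose_mat Q * K * Q) = - (transpose_mat Q * K * Q)"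
proof -
  have "transpose_mat (transpose_mat Q * K * Q) = transpose_mat Q * transpose_mat (transpose_mat Q * K)"
    using K Q by (intro transpose_mult) auto
  also have "transpose_mat (transpose_mat Q * K) = - K * Q"
    using K Q by (subst transpose_mult) auto
  also have "transpose_mat Q * (- K * Q) = - (transpose_mat Q * K * Q)"
    using K Q by (simp add: assoc_mult_mat[of _ m n _ n _ m])
  finally show ?thesis .
qed

lemma orthogonal_congruence_col_eq_0_iff:
  fixes K Q :: "'a :: field mat"
  assumes K: "K \<in> carrier_mat n n" and Q: "Q \<in> carrier_mat n n"
    and Q_orth: "transpose_mat Q * Q = 1\<^sub>m n" and k: "k < n"
  shows "col (transpose_mat Q * K * Q) k = 0\<^sub>v n \<longleftrightarrow> K *\<^sub>v col Q k = 0\<^sub>v n"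
proof -
  have QQt: "Q * transpose_mat Q = 1\<^sub>m n"
    using mat_mult_left_right_inverse[of "transpose_mat Q" n Q] Q Q_orth by simp
  have "transpose_mat Q * K * Q = transpose_mat Q * (K * Q)"
    by (rule assoc_mult_mat) (use K Q in auto)
  then have "col (transpose_mat Q * K * Q) k = transpose_mat Q *\<^sub>v col (K * Q) k"
    using K Q k by (simp del: col_mult add: col_mult2[of _ n n _ n])
  also have "col (K * Q) k = K *\<^sub>v col Q k"
    by (rule col_mult2) (use K Q k in auto)
  finally have col: "col (transpose_mat Q * K * Q) k = transpose_mat Q *\<^sub>v (K *\<^sub>v col Q k)" .
  have "col Q k \<in> carrier_vec n" using Q by auto
  with K have Kq: "K *\<^sub>v col Q k \<in> carrier_vec n" by (rule mult_mat_vec_carrier)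
  then have "K *\<^sub>v col Q k = (Q * transpose_mat Q) *\<^sub>v (K *\<^sub>v col Q k)" by (simp add: QQt)
  also have "\<dots> = Q *\<^sub>v (transpose_mat Q *\<^sub>v (K *\<^sub>v col Q k))"
    using Q Kq by (intro assoc_mult_mat_vec) auto
  finally have "K *\<^sub>v col Q k = Q *\<^sub>v (transpose_mat Q *\<^sub>v (K *\<^sub>v col Q k))" .
  then show ?thesis unfolding col using K Q by auto
qed

lemma skew_four_block_iff_col_eq_0:
  fixes B :: "real mat"
  assumes n: "0 < n" and B: "B \<in> carrier_mat n n" "transpose_mat B = - B"
  shows "(\<exists>K2 \<in> carrier_mat (n - 1) (n - 1). transpose_mat K2 = - K2 \<and>
            B = four_block_mat (0\<^sub>m 1 1) (0\<^sub>m 1 (n - 1)) (0\<^sub>m (n - 1) 1) K2)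
         \<longleftrightarrow> col B 0 = 0\<^sub>v n"
proof
  assume "\<exists>K2 \<in> carrier_mat (n - 1) (n - 1). transpose_mat K2 = - K2 \<and>
            B = four_block_mat (0\<^sub>m 1 1) (0\<^sub>m 1 (n - 1)) (0\<^sub>m (n - 1) 1) K2"
  then obtain K2 where "K2 \<in> carrier_mat (n - 1) (n - 1)"
    and "B = four_block_mat (0\<^sub>m 1 1) (0\<^sub>m 1 (n - 1)) (0\<^sub>m (n - 1) 1) K2" by blast
  then show "col B 0 = 0\<^sub>v n" using n by (intro eq_vecI) auto
next
  assume col0: "col B 0 = 0\<^sub>v n"
  have B_col: "B $$ (i, 0) = 0" if "i < n" for i
    using arg_cong[OF col0, of "\<lambda>v. v $ i"] B n that by simp
  define K2 where "K2 = mat (n - 1) (n - 1) (\<lambda>(i, j). B $$ (i + 1, j + 1))"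
  have K2: "K2 \<in> carrier_mat (n - 1) (n - 1)" unfolding K2_def by simp
  moreover have "transpose_mat K2 = - K2"
  proof (rule eq_matI)
    fix i j assume "i < dim_row (- K2)" "j < dim_col (- K2)"
    then have "i + 1 < n" "j + 1 < n" using K2 by auto
    then show "transpose_mat K2 $$ (i, j) = (- K2) $$ (i, j)"
      using skew_mat_index_swap[OF B, of "i + 1" "j + 1"] by (simp add: K2_def)
  qed (use K2 in auto)
  moreover have "B = four_block_mat (0\<^sub>m 1 1) (0\<^sub>m 1 (n - 1)) (0\<^sub>m (n - 1) 1) K2"
  proof (rule eq_matI)
    fix i j assume "i < dim_row (four_block_mat (0\<^sub>m 1 1) (0\<^sub>m 1 (n - 1)) (0\<^sub>m (n - 1) 1) K2)"
      and "j < dim_col (four_block_mat (0\<^sub>m 1 1) (0\<^sub>m 1 (n - 1)) (0\<^sub>m (n - 1) 1) K2)"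
    then have ij: "i < n" "j < n" using K2 n by auto
    \<comment> \<open>By skewness the first row vanishes along with the first column.\<close>
    have "B $$ (0, j) = 0" using B_col skew_mat_index_swap[OF B n ij(2)] ij by simp
    then show "B $$ (i, j) = four_block_mat (0\<^sub>m 1 1) (0\<^sub>m 1 (n - 1)) (0\<^sub>m (n - 1) 1) K2 $$ (i, j)"
      using ij K2 B_col by (cases i; cases j) (auto simp: K2_def)
  qed (use B K2 n in auto)
  ultimately show "\<exists>K2 \<in> carrier_mat (n - 1) (n - 1). transpose_mat K2 = - K2 \<and>
            B = four_block_mat (0\<^sub>m 1 1) (0\<^sub>m 1 (n - 1)) (0\<^sub>m (n - 1) 1) K2" by blast
qed

theorem corollary4:
  fixes S K Q :: "real mat" and n :: nat
  assumes n: "0 < n"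
    and S: "S \<in> carrier_mat n n" and S_sym: "transpose_mat S = S"
    and S_nonneg: "nonneg_mat S" and S_irr: "irreducible_mat S"
    and K: "K \<in> carrier_mat n n" and K_skew: "transpose_mat K = - K"
    and A_nonneg: "nonneg_mat (S + K)"
    and Q: "Q \<in> carrier_mat n n" and Q_orth: "transpose_mat Q * Q = 1\<^sub>m n"
    and Q_diag: "\<forall>i < n. \<forall>j < n. i \<noteq> j \<longrightarrow> (transpose_mat Q * S * Q) $$ (i, j) = 0"
    and Q_first: "(transpose_mat Q * S * Q) $$ (0, 0) = real_spectral_radius S"
  shows "(\<exists>c. \<forall>t \<in> {0..1::real}.
            real_spectral_radius ((1 - t) \<cdot>\<^sub>m (S + K) + t \<cdot>\<^sub>m transpose_mat (S + K)) = c)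
     \<longleftrightarrow> (\<exists>K2 \<in> carrier_mat (n - 1) (n - 1). transpose_mat K2 = - K2 \<and>
            transpose_mat Q * K * Q =
              four_block_mat (0\<^sub>m 1 1) (0\<^sub>m 1 (n - 1)) (0\<^sub>m (n - 1) 1) K2)"
proof -
  interpret orthogonal_diagonalization S Q n using S Q Q_orth Q_diag by unfold_locales
  let ?r = "real_spectral_radius S"
  have eig0: "eig 0 = ?r" using Q_first by (simp add: eig_def)
  have S0: "S + 0 \<cdot>\<^sub>m K = S" using S K by (intro eq_matI) auto
  have nonneg: "nonneg_mat (S + s \<cdot>\<^sub>m K)" if "\<bar>s\<bar> \<le> 1" for s
    by (rule nonneg_mat_symmetric_plus_smult_skew[OF S S_sym K K_skew A_nonneg that])
  have "(\<exists>c. \<forall>t \<in> {0..1::real}.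
            real_spectral_radius ((1 - t) \<cdot>\<^sub>m (S + K) + t \<cdot>\<^sub>m transpose_mat (S + K)) = c)
     \<longleftrightarrow> (\<forall>s. \<bar>s\<bar> \<le> 1 \<longrightarrow> real_spectral_radius (S + s \<cdot>\<^sub>m K) = ?r)"
    unfolding skew_convex_path[OF S S_sym K K_skew]
    using constant_on_path_iff[of "\<lambda>s. real_spectral_radius (S + s \<cdot>\<^sub>m K)"] S0 by simp
  also have "\<dots> \<longleftrightarrow> K *\<^sub>v col Q 0 = 0\<^sub>v n"
    by (rule real_spectral_radius_skew_path_eq_iff[OF eig_le_real_spectral_radius
          S_nonneg S_irr K K_skew nonneg n eig0])
  also have "\<dots> \<longleftrightarrow> col (transpose_mat Q * K * Q) 0 = 0\<^sub>v n"
    by (rule orthogonal_congruence_col_eq_0_iff[OF K Q Q_orth n, symmetric])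
  also have "\<dots> \<longleftrightarrow> (\<exists>K2 \<in> carrier_mat (n - 1) (n - 1). transpose_mat K2 = - K2 \<and>
            transpose_mat Q * K * Q = four_block_mat (0\<^sub>m 1 1) (0\<^sub>m 1 (n - 1)) (0\<^sub>m (n - 1) 1) K2)"
    using K Q by (intro skew_four_block_iff_col_eq_0[symmetric] n skew_congruence[OF K K_skew Q]) auto
  finally show ?thesis .
qed

end
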